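(* Let $\mathcal{U}=\{u_1,\ldots,u_M\}\subset\mathbb{R}\setminus\{0\}$, $u_{\max}=\max_m|u_m|$, $\sigma_{N/k}^2>0$, and $k\ge1$. For $\omega\in\mathbb{R}$ let $h(\omega)=\sum_{m=1}^M\exp\big(\frac{|u_m|u_{\max}}{\sigma_{N/k}^2}-\frac{u_m^2}{2\sigma_{N/k}^2}+\frac{u_m\omega}{\sigma_{N/k}^2}\big)$. For an integer $n\ge 0$, $\omega_1\in\mathbb{R}^n$ and $s\in\{1,\ldots,n\}$ define $$G_s^n(\omega_1)=\sum_{x'\in\mathcal{X}_s^n(\mathcal{U})}\exp\Big(\frac{u_{\max}\|x'\|_1-\frac12\|x'\|_2^2+x'^{\mathrm{T}}\omega_1}{\sigma_{N/k}^2}\Big),$$ and $G_0^n(\omega_1)=1$. For $0\le a\le b\le n$ let $L_{a,b}^n=\prod_{i=0}^{b-a-1}\frac{b-i}{n-a-i}$ (empty product $=1$). For $j\in\{0,\ldots,k\}$ let $H_0(j)=1$ and, for $w\in\{1,\ldots,k-1\}$, $$H_w(j)=\sum_{w'=\max\{j-w,0\}}^{\min\{j,k-w\}}\binom{j}{w'}\big\lceil L^{k-j}_{k-w-w',\,k-j}\big\rceil.$$ Given $\omega_1\in\mathbb{R}^k$, let $\mathcal{I}=\{j\in\{1,\ldots,k\}: h([\omega_1]_j)\le1\}$ and let $\omega_{1,\mathcal{I}^{\mathrm{c}}}$ be the subvector of $\omega_1$ indexed by $\{1,\ldots,k\}\setminus\mathcal{I}$. Then for all $\omega_1\in\mathbb{R}^k$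 and all $w\in\{0,\ldots,k-1\}$, $$G_{k-w}^k(\omega_1)\le H_w(|\mathcal{I}|)\,G^{k-|\mathcal{I}|}_{k-|\mathcal{I}|}(\omega_{1,\mathcal{I}^{\mathrm{c}}}).$$
   Context: $\mathcal{X}_s^n(\mathcal{U})$ is the set of vectors in $\mathbb{R}^n$ with exactly $s$ nonzero entries, each in $\mathcal{U}$. $\lceil\cdot\rceil$ is the ceiling. *)

theory Defs
  imports Complex_Main
begin

text \<open>Vectors in R^n are represented as real lists of length n (index i < n).\<close>

definition umax :: "real set \<Rightarrow> real" where
  "umax U = Max (abs ` U)"

definition hfun :: "real set \<Rightarrow> real \<Rightarrow> real \<Rightarrow> real" where
  "hfun U sigma2 \<omega> =
     (\<Sum>u\<in>U. exp (\<bar>u\<bar> * umax U / sigma2 - u^2 / (2 * sigma2) + u * \<omega> / sigma2))"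

definition Xset :: "nat \<Rightarrow> nat \<Rightarrow> real set \<Rightarrow> real list set" where
  "Xset s n U = {x. length x = n \<and> card {i. i < n \<and> x ! i \<noteq> 0} = s
                   \<and> (\<forall>i<n. x ! i \<noteq> 0 \<longrightarrow> x ! i \<in> U)}"

definition norm1 :: "real list \<Rightarrow> real" where
  "norm1 x = sum_list (map abs x)"

definition norm2sq :: "real list \<Rightarrow> real" where
  "norm2sq x = sum_list (map (\<lambda>a. a^2) x)"

definition dotl :: "real list \<Rightarrow> real list \<Rightarrow> real" where
  "dotl x y = sum_list (map2 (*) x y)"

definition Gfun :: "real set \<Rightarrow> real \<Rightarrow> nat \<Rightarrow> real list \<Rightarrow> real" where
  "Gfun U sigma2 s \<omega> =
     (if s = 0 then 1 else
      (\<Sum>x\<in>Xset s (length \<omega>) U.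
         exp ((umax U * norm1 x - norm2sq x / 2 + dotl x \<omega>) / sigma2)))"

definition Lfun :: "nat \<Rightarrow> nat \<Rightarrow> nat \<Rightarrow> real" where
  "Lfun n a b = (\<Prod>i<b - a. (real b - real i) / (real n - real a - real i))"

definition Hfun :: "nat \<Rightarrow> nat \<Rightarrow> nat \<Rightarrow> real" where
  "Hfun k w j = (if w = 0 then 1 else
     (\<Sum>w'=max (int j - int w) 0 .. min (int j) (int k - int w).
        real (j choose nat w') * of_int \<lceil>Lfun (k - j) (k - w - nat w') (k - j)\<rceil>))"

end

theory Submission
  imports Defs
begin

text \<open>The exponent of each summand of \<open>G_s^n(\<omega>)\<close> is a sum over coordinates, so the summand
  is a product of one weight per coordinate; a zero coordinate has weight 1, and the weights of
  coordinate \<open>b\<close> summed over all values \<open>u \<in> U\<close> give \<open>h(b)\<close>. Splitting off the first coordinate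
  yields \<open>G_{s+1}(b # \<omega>) = G_{s+1}(\<omega>) + h(b) G_s(\<omega>)\<close>, hence \<open>G_n^n(\<omega>) = \<Prod>_i h(\<omega>_i)\<close> and
  \<open>G_s^n(\<omega>) \<le> (n choose s) \<Prod>_i max 1 (h(\<omega>_i))\<close>. The last product is \<open>G^{k-|I|}_{k-|I|}\<close> of the
  coordinates outside \<open>I\<close>. Finally \<open>L^n_{a,n} = (n choose a)\<close>, so the sum defining \<open>H_w(j)\<close> is
  Vandermonde's convolution and equals \<open>k choose w\<close> for every \<open>j \<le> k\<close>.\<close>

lemma Xset_conv_filter:
  "Xset s n U = {x. length x = n \<and> length (filter (\<lambda>a. a \<noteq> 0) x) = s
                   \<and> (\<forall>a\<in>set x. a \<noteq> 0 \<longrightarrow> a \<in> U)}"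
  unfolding Xset_def length_filter_conv_card by (auto simp: in_set_conv_nth) (metis nth_mem)

lemma finite_Xset: "finite U \<Longrightarrow> finite (Xset s n U)"
  by (rule finite_subset[where B = "{x. set x \<subseteq> insert 0 U \<and> length x = n}"])
     (auto simp: Xset_conv_filter intro: finite_lists_length_eq)

lemma Xset_0: "Xset 0 n U = {replicate n 0}"
  unfolding Xset_conv_filter
  by (auto simp: filter_empty_conv intro: replicate_length_same[symmetric])

lemma Xset_empty_if_less: "n < s \<Longrightarrow> Xset s n U = {}"
  unfolding Xset_conv_filter by (auto simp: leD[OF length_filter_le])

lemma Xset_Suc_Suc:
  assumes "0 \<notin> U"
  shows "Xset (Suc s) (Suc n) U
           = (\<lambda>x. 0 # x) ` Xset (Suc s) n U \<union> (\<lambda>(u, x). u # x) ` (U \<times> Xset s n U)"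
proof (intro set_eqI iffI)
  fix y assume "y \<in> Xset (Suc s) (Suc n) U"
  then obtain a x where y: "y = a # x" "length x = n"
    and nonzeros: "length (filter (\<lambda>a. a \<noteq> 0) (a # x)) = Suc s"
    and in_U: "\<forall>b\<in>set (a # x). b \<noteq> 0 \<longrightarrow> b \<in> U"
    unfolding Xset_conv_filter by (cases y) auto
  show "y \<in> (\<lambda>x. 0 # x) ` Xset (Suc s) n U \<union> (\<lambda>(u, x). u # x) ` (U \<times> Xset s n U)"
  proof (cases "a = 0")
    case True
    then have "x \<in> Xset (Suc s) n U"
      using y nonzeros in_U unfolding Xset_conv_filter by auto
    then show ?thesis using y True by auto
  next
    case False
    then have "x \<in> Xset s n U" "a \<in> U"
      using y nonzeros in_U unfolding Xset_conv_filter by auto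
    then show ?thesis using y by auto
  qed
qed (use assms in \<open>auto simp: Xset_conv_filter\<close>)

locale coordinatewise_weight =
  fixes g :: "real \<Rightarrow> real \<Rightarrow> real" and U :: "real set"
  assumes finite_U: "finite U" and zero_notin_U: "0 \<notin> U"
    and weight_zero: "g b 0 = 1" and weight_nonneg: "g b a \<ge> 0"
begin

definition total_weight :: "real \<Rightarrow> real" where
  "total_weight b = (\<Sum>u\<in>U. g b u)"

definition sparse_sum :: "nat \<Rightarrow> real list \<Rightarrow> real" where
  "sparse_sum s \<omega> = (\<Sum>x\<in>Xset s (length \<omega>) U. prod_list (map2 g \<omega> x))"

lemma total_weight_nonneg: "total_weight b \<ge> 0"
  unfolding total_weight_def by (intro sum_nonneg weight_nonneg)

lemma sparse_sum_nonneg: "sparse_sum s \<omega> \<ge> 0"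
  unfolding sparse_sum_def
  by (intro sum_nonneg prod_list_nonneg) (auto simp: set_zip weight_nonneg)

lemma sparse_sum_0 [simp]: "sparse_sum 0 \<omega> = 1"
proof -
  have "prod_list (map2 g \<omega> (replicate (length \<omega>) 0)) = 1"
    by (induction \<omega>) (simp_all add: weight_zero)
  then show ?thesis unfolding sparse_sum_def by (simp add: Xset_0)
qed

lemma sparse_sum_eq_0: "length \<omega> < s \<Longrightarrow> sparse_sum s \<omega> = 0"
  unfolding sparse_sum_def by (simp add: Xset_empty_if_less)

lemma sparse_sum_Suc_Cons:
  "sparse_sum (Suc s) (b # \<omega>) = sparse_sum (Suc s) \<omega> + total_weight b * sparse_sum s \<omega>"
proof -
  let ?f = "\<lambda>x. prod_list (map2 g (b # \<omega>) x)"
  let ?A = "(\<lambda>x. 0 # x) ` Xset (Suc s) (length \<omega>) U"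
  let ?B = "(\<lambda>(u, x). u # x) ` (U \<times> Xset s (length \<omega>) U)"
  have "?A \<inter> ?B = {}" using zero_notin_U by auto
  then have "sparse_sum (Suc s) (b # \<omega>) = sum ?f ?A + sum ?f ?B"
    unfolding sparse_sum_def using Xset_Suc_Suc[OF zero_notin_U] finite_U
    by (simp add: sum.union_disjoint finite_Xset)
  also have "sum ?f ?A = sparse_sum (Suc s) \<omega>"
    unfolding sparse_sum_def by (subst sum.reindex) (auto simp: inj_on_def weight_zero)
  also have "sum ?f ?B = (\<Sum>(u, x)\<in>U \<times> Xset s (length \<omega>) U. g b u * prod_list (map2 g \<omega> x))"
    by (subst sum.reindex) (auto simp: inj_on_def intro!: sum.cong)
  also have "\<dots> = total_weight b * sparse_sum s \<omega>"
    unfolding sparse_sum_def total_weight_def sum_product sum.cartesian_product by simp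
  finally show ?thesis .
qed

lemma sparse_sum_length: "sparse_sum (length \<omega>) \<omega> = prod_list (map total_weight \<omega>)"
  by (induction \<omega>) (simp_all add: sparse_sum_Suc_Cons sparse_sum_eq_0)

lemma sparse_sum_le_binomial:
  "sparse_sum s \<omega> \<le> real (length \<omega> choose s) * prod_list (map (\<lambda>b. max 1 (total_weight b)) \<omega>)"
proof (induction \<omega> arbitrary: s)
  case Nil
  then show ?case by (cases s) (simp_all add: sparse_sum_eq_0)
next
  case (Cons b \<omega>)
  define M where "M = prod_list (map (\<lambda>b. max 1 (total_weight b)) \<omega>)"
  define m where "m = max 1 (total_weight b)"
  have M: "1 \<le> M" using Cons.IH[of 0] by (simp add: M_def)
  show ?case
  proof (cases s)
    case 0
    have "1 * 1 \<le> m * M" unfolding m_def using M by (intro mult_mono) auto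
    then show ?thesis using 0 by (simp add: M_def m_def)
  next
    case (Suc t)
    have "sparse_sum s (b # \<omega>) = sparse_sum (Suc t) \<omega> + total_weight b * sparse_sum t \<omega>"
      using Suc by (simp add: sparse_sum_Suc_Cons)
    also have "\<dots> \<le> 1 * (real (length \<omega> choose Suc t) * M) + m * (real (length \<omega> choose t) * M)"
      using Cons.IH[of "Suc t"] Cons.IH[of t] total_weight_nonneg sparse_sum_nonneg
      unfolding M_def m_def by (intro add_mono mult_mono) auto
    also have "\<dots> \<le> m * (real (length \<omega> choose Suc t) * M) + m * (real (length \<omega> choose t) * M)"
      using M unfolding m_def by (intro add_mono mult_right_mono) auto
    also have "\<dots> = real (length (b # \<omega>) choose s) * prod_list (map (\<lambda>b. max 1 (total_weight b)) (b # \<omega>))"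
      using Suc by (simp add: M_def m_def algebra_simps)
    finally show ?thesis .
  qed
qed

lemma sparse_sum_le_binomial_filter:
  "sparse_sum s \<omega> \<le> real (length \<omega> choose s) * sparse_sum (length \<omega>') \<omega>'"
  if "\<omega>' = filter (\<lambda>b. \<not> total_weight b \<le> 1) \<omega>"
proof -
  have "prod_list (map (\<lambda>b. max 1 (total_weight b)) \<omega>) = prod_list (map total_weight \<omega>')"
    unfolding that by (induction \<omega>) auto
  then show ?thesis using sparse_sum_le_binomial[of s \<omega>] by (simp add: sparse_sum_length)
qed

end

definition exp_weight :: "real set \<Rightarrow> real \<Rightarrow> real \<Rightarrow> real \<Rightarrow> real" where
  "exp_weight U c b a = exp ((umax U * \<bar>a\<bar> - a^2 / 2 + a * b) / c)"

lemma coordinatewise_weight_exp_weight: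
  "finite U \<Longrightarrow> 0 \<notin> U \<Longrightarrow> coordinatewise_weight (exp_weight U c) U"
  by unfold_locales (simp_all add: exp_weight_def)

lemma exp_eq_prod_list_exp_weight:
  "length x = length \<omega> \<Longrightarrow>
     exp ((umax U * norm1 x - norm2sq x / 2 + dotl x \<omega>) / c) = prod_list (map2 (exp_weight U c) \<omega> x)"
proof (induction x \<omega> rule: list_induct2)
  case Nil
  then show ?case by (simp add: norm1_def norm2sq_def dotl_def)
next
  case (Cons a x b \<omega>)
  have "(umax U * norm1 (a # x) - norm2sq (a # x) / 2 + dotl (a # x) (b # \<omega>)) / c
        = (umax U * \<bar>a\<bar> - a^2 / 2 + a * b) / c + (umax U * norm1 x - norm2sq x / 2 + dotl x \<omega>) / c"
    by (simp add: norm1_def norm2sq_def dotl_def add_divide_distrib[symmetric] algebra_simps)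
  then show ?case using Cons.IH by (simp add: exp_add exp_weight_def)
qed

lemma hfun_eq_total_weight:
  assumes "finite U" "0 \<notin> U"
  shows "hfun U c = coordinatewise_weight.total_weight (exp_weight U c) U"
proof -
  interpret coordinatewise_weight "exp_weight U c" U
    using assms by (rule coordinatewise_weight_exp_weight)
  show ?thesis
  proof
    fix b
    have "hfun U c b = (\<Sum>u\<in>U. exp_weight U c b u)"
      unfolding hfun_def exp_weight_def
      by (intro sum.cong refl arg_cong[where f = exp]) (simp add: diff_divide_distrib add_divide_distrib)
    then show "hfun U c b = total_weight b"
      by (simp only: total_weight_def)
  qed
qed

lemma Gfun_eq_sparse_sum:
  assumes "finite U" "0 \<notin> U"
  shows "Gfun U c s \<omega> = coordinatewise_weight.sparse_sum (exp_weight U c) U s \<omega>"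
proof -
  interpret coordinatewise_weight "exp_weight U c" U
    using assms by (rule coordinatewise_weight_exp_weight)
  show ?thesis
  proof (cases "s = 0")
    case False
    then show ?thesis
      unfolding Gfun_def sparse_sum_def
      by (auto simp: Xset_def exp_eq_prod_list_exp_weight intro!: sum.cong)
  qed (simp add: Gfun_def)
qed

lemma Lfun_self_eq_binomial:
  assumes "a \<le> n"
  shows "Lfun n a n = real (n choose a)"
proof -
  have "real (n choose (n - a)) = (\<Prod>i<n - a. real (n - i) / real (n - a - i))"
    by (simp add: binomial_altdef_of_nat atLeast0LessThan)
  also have "\<dots> = Lfun n a n"
    unfolding Lfun_def using assms by (intro prod.cong) auto
  finally show ?thesis using assms by (simp add: binomial_symmetric[symmetric])
qed

lemma Hfun_eq_binomial:
  assumes "w \<le> k" "j \<le> k"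
  shows "Hfun k w j = real (k choose w)"
proof (cases "w = 0")
  case False
  define lo hi where "lo = j - w" and "hi = min j (k - w)"
  have "Hfun k w j = (\<Sum>a\<in>{lo..hi}. real (j choose a) * of_int \<lceil>Lfun (k - j) (k - w - a) (k - j)\<rceil>)"
  proof -
    have "max (int j - int w) 0 = int lo" "min (int j) (int k - int w) = int hi"
      using assms unfolding lo_def hi_def by auto
    then show ?thesis
      unfolding Hfun_def using False by (simp add: image_int_atLeastAtMost[symmetric] sum.reindex)
  qed
  also have "\<dots> = real (\<Sum>a\<in>{lo..hi}. (j choose a) * ((k - j) choose (k - w - a)))"
    unfolding of_nat_sum
    by (intro sum.cong refl) (auto simp: Lfun_self_eq_binomial lo_def hi_def)
  also have "\<dots> = real (\<Sum>a\<le>k - w. (j choose a) * ((k - j) choose (k - w - a)))"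
    \<comment> \<open>the omitted terms have \<open>a > j\<close> or \<open>k - w - a > k - j\<close>\<close>
    using assms by (intro arg_cong[where f = real] sum.mono_neutral_left) (auto simp: lo_def hi_def not_le)
  also have "\<dots> = real (k choose w)"
    using vandermonde[of j "k - j" "k - w"] assms by (simp add: binomial_symmetric[symmetric])
  finally show ?thesis .
qed (simp add: Hfun_def)

lemma nths_compl_eq_filter:
  "nths xs ({0..<length xs} - {i. i < length xs \<and> P (xs ! i)}) = filter (\<lambda>a. \<not> P a) xs"
proof -
  have "{0..<length xs} - {i. i < length xs \<and> P (xs ! i)} = {i. i < length xs \<and> \<not> P (xs ! i)}"
    by auto
  then show ?thesis by (simp add: filter_eq_nths)
qed

lemma length_filter_compl_eq_diff_card:
  "length (filter (\<lambda>a. \<not> P a) xs) = length xs - card {i. i < length xs \<and> P (xs ! i)}"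
  using sum_length_filter_compl[of P xs] by (simp add: length_filter_conv_card)

theorem lemma5:
  fixes U :: "real set" and sigma2 :: real and k w :: nat and \<omega>1 :: "real list"
  assumes "finite U" and "U \<noteq> {}" and "0 \<notin> U"
    and "sigma2 > 0" and "k \<ge> 1"
    and "length \<omega>1 = k"
    and "w \<le> k - 1"
  shows "Gfun U sigma2 (k - w) \<omega>1
      \<le> Hfun k w (card {j. j < k \<and> hfun U sigma2 (\<omega>1 ! j) \<le> 1})
        * Gfun U sigma2 (k - card {j. j < k \<and> hfun U sigma2 (\<omega>1 ! j) \<le> 1})
            (nths \<omega>1 ({0..<k} - {j. j < k \<and> hfun U sigma2 (\<omega>1 ! j) \<le> 1}))"
proof -
  interpret coordinatewise_weight "exp_weight U sigma2" U
    using assms(1,3) by (rule coordinatewise_weight_exp_weight)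
  have h: "hfun U sigma2 = total_weight"
    using assms(1,3) by (rule hfun_eq_total_weight)
  let ?I = "{j. j < k \<and> total_weight (\<omega>1 ! j) \<le> 1}"
  let ?\<omega>c = "filter (\<lambda>b. \<not> total_weight b \<le> 1) \<omega>1"
  have card_I: "card ?I \<le> k"
    by (rule order_trans[OF card_mono[of "{..<k}"]]) auto
  have \<omega>c: "nths \<omega>1 ({0..<k} - ?I) = ?\<omega>c" "length ?\<omega>c = k - card ?I"
    using nths_compl_eq_filter[of \<omega>1] length_filter_compl_eq_diff_card[of _ \<omega>1] assms(6)
    by simp_all
  have "Gfun U sigma2 (k - w) \<omega>1 \<le> real (k choose (k - w)) * sparse_sum (length ?\<omega>c) ?\<omega>c"
    using sparse_sum_le_binomial_filter[OF refl, of "k - w" \<omega>1] assms(1,3,6)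
    by (simp add: Gfun_eq_sparse_sum)
  also have "\<dots> = Hfun k w (card ?I) * Gfun U sigma2 (k - card ?I) ?\<omega>c"
    using assms(1,3,7) card_I \<omega>c(2)
    by (simp add: Hfun_eq_binomial binomial_symmetric[symmetric] Gfun_eq_sparse_sum)
  finally show ?thesis unfolding h \<omega>c(1) .
qed

end
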